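(* Let $K_1,K_2$ be non-trivial $\mathcal R$-dioids. Then for all $a,a'\in K_1$ and $b,b'\in K_2$: (i) if $a\otimes b=0$ in $K_1\otimes_{\mathcal R}K_2$, then $a=0$ in $K_1$ or $b=0$ in $K_2$; (ii) if $0\ne a\otimes b\le a'\otimes b'$ in $K_1\otimes_{\mathcal R}K_2$, then $0\ne a\le a'$ in $K_1$ and $0\ne b\le b'$ in $K_2$.
   Context: An $\mathcal R$-dioid is a dioid in which every regular subset of its multiplicative monoid has a supremum $\sum A$ with $\sum(AB)=(\sum A)(\sum B)$ (equivalently a $*$-continuous Kleene algebra); non-trivial means $0\ne1$; $\le$ is the natural order $x\le y$ iff $x+y=y$. The tensor product $K_1\otimes_{\mathcal R}K_2$ is the $\mathcal R$-dioid with $\mathcal R$-morphisms (dioid morphisms preserving suprema of regular sets) $\top_1,\top_2$ from $K_1,K_2$ with elementwise commuting images, universal among such pairs; concretely $\mathcal R(K_1\times K_2)/{\equiv}$, where $\equiv$ is the least $\mathcal R$-congruence identifying $A\times B$ with $\{(\sum A,\sum B)\}$ for regular $A\subseteq K_1,B\subseteq K_2$ (an $\mathcal R$-congruence being a semiring congruence such that regular sets with equal downward closures modulo it have congruent suprema). We write $a\otimes b=\top_1(a)\top_2(b)$, the class of $\{(a,b)\}$. *)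

theory Defs
  imports Main
begin

text \<open>A dioid: semiring (with annihilating zero) whose addition is idempotent.
  Non-triviality (0 \<noteq> 1) is NOT built in; it is assumed explicitly.\<close>
class dioid = semiring_0 + monoid_mult +
  assumes add_idem: "x + x = x"

definition dle :: "'a::dioid \<Rightarrow> 'a \<Rightarrow> bool" where
  "dle x y \<longleftrightarrow> x + y = y"

definition setmul :: "('c \<Rightarrow> 'c \<Rightarrow> 'c) \<Rightarrow> 'c set \<Rightarrow> 'c set \<Rightarrow> 'c set" where
  "setmul mul A B = {mul a b | a b. a \<in> A \<and> b \<in> B}"

primrec setpow :: "('c \<Rightarrow> 'c \<Rightarrow> 'c) \<Rightarrow> 'c \<Rightarrow> 'c set \<Rightarrow> nat \<Rightarrow> 'c set" where
  "setpow mul e A 0 = {e}"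
| "setpow mul e A (Suc n) = setmul mul A (setpow mul e A n)"

definition setstar :: "('c \<Rightarrow> 'c \<Rightarrow> 'c) \<Rightarrow> 'c \<Rightarrow> 'c set \<Rightarrow> 'c set" where
  "setstar mul e A = (\<Union>n. setpow mul e A n)"

inductive_set regs_in :: "'c set \<Rightarrow> ('c \<Rightarrow> 'c \<Rightarrow> 'c) \<Rightarrow> 'c \<Rightarrow> 'c set set"
  for C :: "'c set" and mul :: "'c \<Rightarrow> 'c \<Rightarrow> 'c" and e :: 'c where
  fin: "finite A \<Longrightarrow> A \<subseteq> C \<Longrightarrow> A \<in> regs_in C mul e"
| union: "A \<in> regs_in C mul e \<Longrightarrow> B \<in> regs_in C mul e \<Longrightarrow> A \<union> B \<in> regs_in C mul e"
| prod: "A \<in> regs_in C mul e \<Longrightarrow> B \<in> regs_in C mul e \<Longrightarrow> setmul mul A B \<in> regs_in C mul e"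
| star: "A \<in> regs_in C mul e \<Longrightarrow> setstar mul e A \<in> regs_in C mul e"

abbreviation regs :: "('c \<Rightarrow> 'c \<Rightarrow> 'c) \<Rightarrow> 'c \<Rightarrow> 'c set set" where
  "regs mul e \<equiv> regs_in UNIV mul e"

abbreviation Reg :: "'a::dioid set set" where
  "Reg \<equiv> regs (*) 1"

definition is_sup :: "'a::dioid set \<Rightarrow> 'a \<Rightarrow> bool" where
  "is_sup A s \<longleftrightarrow> (\<forall>a\<in>A. dle a s) \<and> (\<forall>u. (\<forall>a\<in>A. dle a u) \<longrightarrow> dle s u)"

definition dsum :: "'a::dioid set \<Rightarrow> 'a" where
  "dsum A = (THE s. is_sup A s)"

definition R_dioid :: "'a::dioid itself \<Rightarrow> bool" where
  "R_dioid _ \<longleftrightarrow>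
     (\<forall>A::'a set. A \<in> Reg \<longrightarrow> (\<exists>s. is_sup A s)) \<and>
     (\<forall>A B::'a set. A \<in> Reg \<longrightarrow> B \<in> Reg \<longrightarrow>
        dsum (setmul (*) A B) = dsum A * dsum B)"

section \<open>The tensor product as R(K1 x K2) modulo the least R-congruence\<close>

definition pmul :: "'a::dioid \<times> 'b::dioid \<Rightarrow> 'a \<times> 'b \<Rightarrow> 'a \<times> 'b" where
  "pmul p q = (fst p * fst q, snd p * snd q)"

text \<open>R(M) for the monoid M (mul, e): regular subsets, with + = union,
  product = setmul, 0 = {}, 1 = {e}.  An R-congruence on R(M): an equivalence
  on R(M) compatible with union and product such that regular subsets
  (of the multiplicative monoid of R(M)) with equal downward closures modulo
  it have congruent suprema (suprema in R(M) are unions).  The order in the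
  quotient is [Y] \<le> [X] iff (Y \<union> X, X) is in the congruence.\<close>
definition R_cong :: "('c \<Rightarrow> 'c \<Rightarrow> 'c) \<Rightarrow> 'c \<Rightarrow> ('c set \<times> 'c set) set \<Rightarrow> bool" where
  "R_cong mul e \<theta> \<longleftrightarrow>
     equiv (regs mul e) \<theta> \<and>
     (\<forall>X X' Y Y'. (X, X') \<in> \<theta> \<longrightarrow> (Y, Y') \<in> \<theta> \<longrightarrow>
        (X \<union> Y, X' \<union> Y') \<in> \<theta> \<and> (setmul mul X Y, setmul mul X' Y') \<in> \<theta>) \<and>
     (\<forall>\<A> \<B>. \<A> \<in> regs_in (regs mul e) (setmul mul) {e} \<longrightarrow>
             \<B> \<in> regs_in (regs mul e) (setmul mul) {e} \<longrightarrow>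
        (\<forall>Y\<in>regs mul e. (\<exists>X\<in>\<A>. (Y \<union> X, X) \<in> \<theta>) \<longleftrightarrow> (\<exists>X\<in>\<B>. (Y \<union> X, X) \<in> \<theta>)) \<longrightarrow>
        (\<Union>\<A>, \<Union>\<B>) \<in> \<theta>)"

definition tensor_gens :: "(('a::dioid \<times> 'b::dioid) set \<times> ('a \<times> 'b) set) set" where
  "tensor_gens = {(A \<times> B, {(dsum A, dsum B)}) | A B. A \<in> Reg \<and> B \<in> Reg}"

definition tensor_cong :: "(('a::dioid \<times> 'b::dioid) set \<times> ('a \<times> 'b) set) set" where
  "tensor_cong = {(X, Y). \<forall>\<theta>. R_cong pmul (1, 1) \<theta> \<and> tensor_gens \<subseteq> \<theta> \<longrightarrow> (X, Y) \<in> \<theta>}"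

text \<open>Elements a \<otimes> b, zero, and natural order in the tensor product, on representatives.\<close>
definition tensor_zero :: "'a::dioid \<Rightarrow> 'b::dioid \<Rightarrow> bool" where
  "tensor_zero a b \<longleftrightarrow> ({(a, b)}, {}) \<in> tensor_cong"

definition tensor_le :: "'a::dioid \<Rightarrow> 'b::dioid \<Rightarrow> 'a \<Rightarrow> 'b \<Rightarrow> bool" where
  "tensor_le a b a' b' \<longleftrightarrow> ({(a, b)} \<union> {(a', b')}, {(a', b')}) \<in> tensor_cong"

end

theory Submission
  imports Defs
begin

text \<open>
  For a set X of pairs in K1 x K2 let cl X be the least set containing X that is downward
  closed and closed under suprema of regular sets taken in one coordinate at a time.
  Equality of closures is an R-congruence on R(K1 x K2): it respects products because
  multiplication by a fixed element preserves regular suprema, and it identifies A x B with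
  (Sum A, Sum B). Hence it contains the least such congruence, so a \<otimes> b = 0 puts (a, b) into
  cl {} and a \<otimes> b \<le> a' \<otimes> b' puts (a, b) into cl {(a', b')}. The latter closure is computed
  directly: the pairs with a zero coordinate together with those below (a', b') already form
  a closed set.
\<close>

lemma setmul_mono: "A \<subseteq> A' \<Longrightarrow> B \<subseteq> B' \<Longrightarrow> setmul m A B \<subseteq> setmul m A' B'"
  unfolding setmul_def by blast

lemma setmul_Union: "\<Union>(setmul (setmul m) AA BB) = setmul m (\<Union>AA) (\<Union>BB)"
  unfolding setmul_def by blast

lemma setpow_Union: "\<Union>(setpow (setmul m) {e} AA n) = setpow m e (\<Union>AA) n"
  by (induction n) (simp_all add: setmul_Union)

lemma setstar_Union: "\<Union>(setstar (setmul m) {e} AA) = setstar m e (\<Union>AA)"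
  unfolding setstar_def by (auto simp flip: setpow_Union)

lemma regs_in_subset:
  assumes "A \<in> regs_in C m e" and "e \<in> C" and "\<And>a b. a \<in> C \<Longrightarrow> b \<in> C \<Longrightarrow> m a b \<in> C"
  shows "A \<subseteq> C"
  using assms(1)
proof (induction rule: regs_in.induct)
  case (prod A B)
  then show ?case using assms(3) unfolding setmul_def by blast
next
  case (star A)
  have "setpow m e A n \<subseteq> C" for n
    by (induction n) (use star assms(2,3) in \<open>auto simp: setmul_def\<close>)
  then show ?case unfolding setstar_def by blast
qed auto

lemma Union_finite_regs: "finite F \<Longrightarrow> F \<subseteq> regs m e \<Longrightarrow> \<Union>F \<in> regs m e"
  by (induction rule: finite_induct) (auto intro: regs_in.fin regs_in.union)

lemma Union_regs: "AA \<in> regs_in (regs m e) (setmul m) {e} \<Longrightarrow> \<Union>AA \<in> regs m e"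
proof (induction rule: regs_in.induct)
  case (prod A B)
  then show ?case by (simp add: setmul_Union regs_in.prod)
next
  case (star A)
  then show ?case by (simp add: setstar_Union regs_in.star)
qed (auto intro: Union_finite_regs regs_in.union)

lemma image_setmul:
  assumes "\<And>a b. h (m a b) = m' (h a) (h b)"
  shows "h ` setmul m A B = setmul m' (h ` A) (h ` B)"
  unfolding setmul_def image_def by (auto simp: assms) (metis assms)+

lemma image_regs:
  assumes "A \<in> regs m e" and hom: "\<And>a b. h (m a b) = m' (h a) (h b)" and "h e = e'"
  shows "h ` A \<in> regs m' e'"
proof -
  have image_hom: "h ` setmul m A B = setmul m' (h ` A) (h ` B)" for A B
    by (rule image_setmul) (rule hom)
  from assms(1) show ?thesis
  proof (induction rule: regs_in.induct)
    case (fin A)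
    then show ?case by (simp add: regs_in.fin)
  next
    case (union A B)
    then show ?case by (simp add: image_Un regs_in.union)
  next
    case (prod A B)
    then show ?case by (simp add: image_hom regs_in.prod)
  next
    case (star A)
    have "h ` setpow m e A n = setpow m' e' (h ` A) n" for n
      by (induction n) (simp_all add: image_hom \<open>h e = e'\<close>)
    then have "h ` setstar m e A = setstar m' e' (h ` A)"
      unfolding setstar_def by (simp add: image_UN)
    with star show ?case by (simp add: regs_in.star)
  qed
qed

lemma Times_regs:
  assumes "(A::'a::dioid set) \<in> Reg" and "(B::'b::dioid set) \<in> Reg"
  shows "A \<times> B \<in> regs pmul (1, 1)"
proof -
  have "(\<lambda>x. (x, 1::'b)) ` A \<in> regs pmul (1, 1)"
    by (rule image_regs[OF assms(1)]) (auto simp: pmul_def)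
  moreover have "(\<lambda>y. (1::'a, y)) ` B \<in> regs pmul (1, 1)"
    by (rule image_regs[OF assms(2)]) (auto simp: pmul_def)
  moreover have "A \<times> B = setmul pmul ((\<lambda>x. (x, 1)) ` A) ((\<lambda>y. (1, y)) ` B)"
    by (force simp: setmul_def pmul_def)
  ultimately show ?thesis by (metis regs_in.prod)
qed

lemma dle_refl: "dle (x::'a::dioid) x"
  by (simp add: dle_def add_idem)

lemma dle_trans: "dle (x::'a::dioid) y \<Longrightarrow> dle y z \<Longrightarrow> dle x z"
  by (metis dle_def add.assoc)

lemma dle_antisym: "dle (x::'a::dioid) y \<Longrightarrow> dle y x \<Longrightarrow> x = y"
  by (metis dle_def add.commute)

lemma dle_zero: "dle 0 (x::'a::dioid)"
  by (simp add: dle_def)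

lemma dle_zero_iff: "dle (x::'a::dioid) 0 \<longleftrightarrow> x = 0"
  by (simp add: dle_def)

lemma dle_mult_right: "dle (x::'a::dioid) y \<Longrightarrow> dle (x * z) (y * z)"
  by (metis dle_def distrib_right)

lemma dle_mult_left: "dle (x::'a::dioid) y \<Longrightarrow> dle (z * x) (z * y)"
  by (metis dle_def distrib_left)

lemma is_sup_unique: "is_sup A s \<Longrightarrow> is_sup A t \<Longrightarrow> s = t"
  unfolding is_sup_def by (meson dle_antisym)

lemma dsum_eqI: "is_sup A s \<Longrightarrow> dsum A = s"
  unfolding dsum_def using is_sup_unique by blast

lemma dsum_empty: "dsum {} = (0::'a::dioid)"
  by (rule dsum_eqI) (simp add: is_sup_def dle_zero)

lemma dsum_singleton: "dsum {x} = (x::'a::dioid)"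
  by (rule dsum_eqI) (simp add: is_sup_def dle_refl)

lemma finite_Reg: "finite A \<Longrightarrow> (A::'a::dioid set) \<in> Reg"
  by (rule regs_in.fin) auto

lemma is_sup_dsum: "R_dioid TYPE('a::dioid) \<Longrightarrow> (A::'a set) \<in> Reg \<Longrightarrow> is_sup A (dsum A)"
  unfolding R_dioid_def using dsum_eqI by metis

lemma dsum_upper:
  "R_dioid TYPE('a::dioid) \<Longrightarrow> (A::'a set) \<in> Reg \<Longrightarrow> x \<in> A \<Longrightarrow> dle x (dsum A)"
  using is_sup_dsum unfolding is_sup_def by blast

lemma dsum_least:
  "R_dioid TYPE('a::dioid) \<Longrightarrow> (A::'a set) \<in> Reg \<Longrightarrow> (\<And>x. x \<in> A \<Longrightarrow> dle x u) \<Longrightarrow>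
   dle (dsum A) u"
  using is_sup_dsum unfolding is_sup_def by blast

lemma dsum_zero_or_le:
  assumes "R_dioid TYPE('a::dioid)" and "(A::'a set) \<in> Reg"
    and "\<And>x. x \<in> A \<Longrightarrow> x = 0 \<or> (dle x u \<and> P)"
  shows "dsum A = 0 \<or> (dle (dsum A) u \<and> P)"
proof (cases P)
  case True
  then have "dle (dsum A) u"
    using assms by (metis dsum_least dle_zero)
  with True show ?thesis by blast
next
  case False
  then have "dle (dsum A) 0"
    using assms by (metis dsum_least dle_refl)
  then show ?thesis by (simp add: dle_zero_iff)
qed

lemma dsum_setmul:
  "R_dioid TYPE('a::dioid) \<Longrightarrow> (A::'a set) \<in> Reg \<Longrightarrow> B \<in> Reg \<Longrightarrow>
   dsum (setmul (*) A B) = dsum A * dsum B"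
  unfolding R_dioid_def by blast

definition preserves_reg_sups :: "('a::dioid \<Rightarrow> 'b::dioid) \<Rightarrow> bool" where
  "preserves_reg_sups f \<longleftrightarrow>
     (\<forall>x y. dle x y \<longrightarrow> dle (f x) (f y)) \<and>
     (\<forall>A\<in>Reg. f ` A \<in> Reg \<and> dsum (f ` A) = f (dsum A))"

lemma preserves_reg_sups_mult_right:
  assumes "R_dioid TYPE('a::dioid)"
  shows "preserves_reg_sups (\<lambda>x::'a. x * c)"
proof -
  have image_eq: "(\<lambda>x. x * c) ` A = setmul (*) A {c}" for A :: "'a set"
    by (auto simp: setmul_def)
  show ?thesis
    unfolding preserves_reg_sups_def image_eq
    using dsum_setmul[OF assms _ finite_Reg, of _ "{c}"]
    by (auto simp: dle_mult_right dsum_singleton intro: regs_in.prod finite_Reg)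
qed

lemma preserves_reg_sups_mult_left:
  assumes "R_dioid TYPE('a::dioid)"
  shows "preserves_reg_sups (\<lambda>x::'a. c * x)"
proof -
  have image_eq: "(\<lambda>x. c * x) ` A = setmul (*) {c} A" for A :: "'a set"
    by (auto simp: setmul_def)
  show ?thesis
    unfolding preserves_reg_sups_def image_eq
    using dsum_setmul[OF assms finite_Reg, of "{c}"]
    by (auto simp: dle_mult_left dsum_singleton intro: regs_in.prod finite_Reg)
qed

section \<open>Closure of sets of pairs\<close>

inductive_set ideal_closure :: "('a::dioid \<times> 'b::dioid) set \<Rightarrow> ('a \<times> 'b) set" for X where
  base: "p \<in> X \<Longrightarrow> p \<in> ideal_closure X"
| down: "(x', y') \<in> ideal_closure X \<Longrightarrow> dle x x' \<Longrightarrow> dle y y' \<Longrightarrow> (x, y) \<in> ideal_closure X"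
| sup_left: "A \<in> Reg \<Longrightarrow> (\<And>x. x \<in> A \<Longrightarrow> (x, y) \<in> ideal_closure X) \<Longrightarrow>
    (dsum A, y) \<in> ideal_closure X"
| sup_right: "B \<in> Reg \<Longrightarrow> (\<And>y. y \<in> B \<Longrightarrow> (x, y) \<in> ideal_closure X) \<Longrightarrow>
    (x, dsum B) \<in> ideal_closure X"

lemma ideal_closure_least: "X \<subseteq> ideal_closure Y \<Longrightarrow> ideal_closure X \<subseteq> ideal_closure Y"
proof
  fix p assume "p \<in> ideal_closure X" and "X \<subseteq> ideal_closure Y"
  then show "p \<in> ideal_closure Y"
    by (induction rule: ideal_closure.induct)
      (auto intro: ideal_closure.down ideal_closure.sup_left ideal_closure.sup_right)
qed

lemma ideal_closure_incr: "X \<subseteq> ideal_closure X"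
  by (auto intro: ideal_closure.base)

lemma ideal_closure_mono: "X \<subseteq> Y \<Longrightarrow> ideal_closure X \<subseteq> ideal_closure Y"
  using ideal_closure_least ideal_closure_incr by blast

lemma ideal_closure_eq_iff:
  "ideal_closure X = ideal_closure Y \<longleftrightarrow> X \<subseteq> ideal_closure Y \<and> Y \<subseteq> ideal_closure X"
  using ideal_closure_least ideal_closure_incr by blast

lemma Union_subset_ideal_closure:
  "(\<And>X. X \<in> \<C> \<Longrightarrow> \<exists>X'\<in>\<D>. X \<subseteq> ideal_closure X') \<Longrightarrow> \<Union>\<C> \<subseteq> ideal_closure (\<Union>\<D>)"
  using ideal_closure_mono[of _ "\<Union>\<D>"] by blast

lemma ideal_closure_map:
  assumes f: "preserves_reg_sups f" and g: "preserves_reg_sups g"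
    and "map_prod f g ` X \<subseteq> ideal_closure Z"
  shows "map_prod f g ` ideal_closure X \<subseteq> ideal_closure Z"
proof
  fix p assume "p \<in> map_prod f g ` ideal_closure X"
  then obtain q where "q \<in> ideal_closure X" and p: "p = map_prod f g q" by (rule imageE)
  from this(1) show "p \<in> ideal_closure Z" unfolding p
  proof (induction rule: ideal_closure.induct)
    case (base q)
    then show ?case using assms(3) by blast
  next
    case (down x' y' x y)
    then show ?case
      using f g unfolding preserves_reg_sups_def by (auto intro: ideal_closure.down)
  next
    case (sup_left A y)
    have "f ` A \<in> Reg" and "dsum (f ` A) = f (dsum A)"
      using f sup_left.hyps unfolding preserves_reg_sups_def by auto
    moreover have "(x, g y) \<in> ideal_closure Z" if "x \<in> f ` A" for x
      using that sup_left.IH by auto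
    ultimately show ?case by (metis ideal_closure.sup_left map_prod_simp)
  next
    case (sup_right B x)
    have "g ` B \<in> Reg" and "dsum (g ` B) = g (dsum B)"
      using g sup_right.hyps unfolding preserves_reg_sups_def by auto
    moreover have "(f x, y) \<in> ideal_closure Z" if "y \<in> g ` B" for y
      using that sup_right.IH by auto
    ultimately show ?case by (metis ideal_closure.sup_right map_prod_simp)
  qed
qed

lemma ideal_closure_setmul:
  assumes "R_dioid TYPE('a::dioid)" and "R_dioid TYPE('b::dioid)"
  shows "setmul pmul (ideal_closure X) (ideal_closure Y)
           \<subseteq> ideal_closure (setmul pmul X (Y::('a \<times> 'b) set))"
proof -
  have mult_right: "(\<lambda>p. pmul p q) = map_prod (\<lambda>x. x * fst q) (\<lambda>y. y * snd q)"
    and mult_left: "pmul p = map_prod (\<lambda>x. fst p * x) (\<lambda>y. snd p * y)"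
    for p q :: "'a \<times> 'b"
    by (auto simp: pmul_def fun_eq_iff)
  have right_factor: "(\<lambda>p. pmul p q) ` ideal_closure X \<subseteq> ideal_closure (setmul pmul X Y)"
    if "q \<in> Y" for q
  proof -
    have "(\<lambda>p. pmul p q) ` X \<subseteq> setmul pmul X Y"
      using that unfolding setmul_def by blast
    then have "(\<lambda>p. pmul p q) ` X \<subseteq> ideal_closure (setmul pmul X Y)"
      using ideal_closure_incr by blast
    then show ?thesis
      unfolding mult_right
      by (rule ideal_closure_map[OF preserves_reg_sups_mult_right preserves_reg_sups_mult_right,
            OF assms])
  qed
  have "pmul p ` ideal_closure Y \<subseteq> ideal_closure (setmul pmul X Y)"
    if "p \<in> ideal_closure X" for p
  proof -
    have "pmul p ` Y \<subseteq> ideal_closure (setmul pmul X Y)"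
      using right_factor that by blast
    then show ?thesis
      unfolding mult_left[of p]
      by (rule ideal_closure_map[OF preserves_reg_sups_mult_left preserves_reg_sups_mult_left,
            OF assms])
  qed
  then show ?thesis by (auto simp: setmul_def)
qed

lemma ideal_closure_singleton:
  assumes "R_dioid TYPE('a::dioid)" and "R_dioid TYPE('b::dioid)"
    and "p \<in> ideal_closure {(a', b') :: 'a \<times> 'b}"
  shows "fst p = 0 \<or> snd p = 0 \<or> (dle (fst p) a' \<and> dle (snd p) b')"
  using assms(3)
proof (induction rule: ideal_closure.induct)
  case (base p)
  then show ?case by (auto simp: dle_refl)
next
  case (down x' y' x y)
  then show ?case by (auto simp: dle_zero_iff intro: dle_trans)
next
  case (sup_left A y)
  show ?case
  proof (cases "y = 0")
    case False
    with sup_left.IH have "x = 0 \<or> (dle x a' \<and> dle y b')" if "x \<in> A" for x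
      using that by auto
    then have "dsum A = 0 \<or> (dle (dsum A) a' \<and> dle y b')"
      by (rule dsum_zero_or_le[OF assms(1) sup_left.hyps(1)])
    then show ?thesis by auto
  qed simp
next
  case (sup_right B x)
  show ?case
  proof (cases "x = 0")
    case False
    with sup_right.IH have "y = 0 \<or> (dle y b' \<and> dle x a')" if "y \<in> B" for y
      using that by auto
    then have "dsum B = 0 \<or> (dle (dsum B) b' \<and> dle x a')"
      by (rule dsum_zero_or_le[OF assms(2) sup_right.hyps(1)])
    then show ?thesis by auto
  qed simp
qed

section \<open>Equality of closures is an R-congruence\<close>

definition closure_cong :: "(('a::dioid \<times> 'b::dioid) set \<times> ('a \<times> 'b) set) set" where
  "closure_cong = {(X, Y). X \<in> regs pmul (1, 1) \<and> Y \<in> regs pmul (1, 1) \<and>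
                           ideal_closure X = ideal_closure Y}"

lemma closure_cong_le_iff:
  "Y \<in> regs pmul (1, 1) \<Longrightarrow> X \<in> regs pmul (1, 1) \<Longrightarrow>
   (Y \<union> X, X) \<in> closure_cong \<longleftrightarrow> Y \<subseteq> ideal_closure X"
  unfolding closure_cong_def ideal_closure_eq_iff
  using ideal_closure_incr ideal_closure_mono[of X "Y \<union> X"] by (auto intro: regs_in.union)

lemma R_cong_closure_cong:
  assumes "R_dioid TYPE('a::dioid)" and "R_dioid TYPE('b::dioid)"
  shows "R_cong pmul (1, 1) (closure_cong :: (('a \<times> 'b) set \<times> ('a \<times> 'b) set) set)"
  unfolding R_cong_def
proof (intro conjI allI impI)
  show "equiv (regs pmul (1, 1)) (closure_cong :: (('a \<times> 'b) set \<times> ('a \<times> 'b) set) set)"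
    unfolding equiv_def refl_on_def sym_def trans_def closure_cong_def by auto
next
  fix X X' Y Y' :: "('a \<times> 'b) set"
  assume "(X, X') \<in> closure_cong" and "(Y, Y') \<in> closure_cong"
  then have regs: "X \<in> regs pmul (1, 1)" "X' \<in> regs pmul (1, 1)"
      "Y \<in> regs pmul (1, 1)" "Y' \<in> regs pmul (1, 1)"
    and X: "ideal_closure X = ideal_closure X'" and Y: "ideal_closure Y = ideal_closure Y'"
    unfolding closure_cong_def by auto
  have "ideal_closure (X \<union> Y) = ideal_closure (X' \<union> Y')"
    using X Y ideal_closure_mono[of _ "X \<union> Y"] ideal_closure_mono[of _ "X' \<union> Y'"]
    unfolding ideal_closure_eq_iff by blast
  with regs show "(X \<union> Y, X' \<union> Y') \<in> closure_cong"
    unfolding closure_cong_def by (auto intro: regs_in.union)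
  have setmul_le: "setmul pmul X Y \<subseteq> ideal_closure (setmul pmul X' Y')"
    if "ideal_closure X = ideal_closure X'" "ideal_closure Y = ideal_closure Y'"
    for X Y X' Y' :: "('a \<times> 'b) set"
  proof -
    have "setmul pmul X Y \<subseteq> setmul pmul (ideal_closure X') (ideal_closure Y')"
      using that by (metis setmul_mono ideal_closure_incr)
    also have "\<dots> \<subseteq> ideal_closure (setmul pmul X' Y')"
      by (rule ideal_closure_setmul[OF assms])
    finally show ?thesis .
  qed
  have "ideal_closure (setmul pmul X Y) = ideal_closure (setmul pmul X' Y')"
    unfolding ideal_closure_eq_iff using setmul_le X Y by simp
  with regs show "(setmul pmul X Y, setmul pmul X' Y') \<in> closure_cong"
    unfolding closure_cong_def by (auto intro: regs_in.prod)
next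
  fix AA BB :: "('a \<times> 'b) set set"
  let ?R = "regs_in (regs pmul (1, 1)) (setmul pmul) {(1, 1)}"
  assume AA: "AA \<in> ?R" and BB: "BB \<in> ?R"
    and same_lower_bounds: "\<forall>Y\<in>regs pmul (1, 1).
      (\<exists>X\<in>AA. (Y \<union> X, X) \<in> closure_cong) \<longleftrightarrow> (\<exists>X\<in>BB. (Y \<union> X, X) \<in> closure_cong)"
  have "AA \<subseteq> regs pmul (1, 1)" and "BB \<subseteq> regs pmul (1, 1)"
    by (rule regs_in_subset[OF AA] regs_in_subset[OF BB]; auto intro: regs_in.fin regs_in.prod)+
  then have lower_bounds: "\<forall>Y\<in>regs pmul (1, 1).
      (\<exists>X\<in>AA. Y \<subseteq> ideal_closure X) \<longleftrightarrow> (\<exists>X\<in>BB. Y \<subseteq> ideal_closure X)"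
    using same_lower_bounds by (auto simp: closure_cong_le_iff subset_iff)
  have "\<Union>AA \<subseteq> ideal_closure (\<Union>BB)"
  proof (rule Union_subset_ideal_closure)
    fix X assume "X \<in> AA"
    then show "\<exists>X'\<in>BB. X \<subseteq> ideal_closure X'"
      using lower_bounds \<open>AA \<subseteq> _\<close> ideal_closure_incr by blast
  qed
  moreover have "\<Union>BB \<subseteq> ideal_closure (\<Union>AA)"
  proof (rule Union_subset_ideal_closure)
    fix X assume "X \<in> BB"
    then show "\<exists>X'\<in>AA. X \<subseteq> ideal_closure X'"
      using lower_bounds \<open>BB \<subseteq> _\<close> ideal_closure_incr by blast
  qed
  ultimately show "(\<Union>AA, \<Union>BB) \<in> closure_cong"
    unfolding closure_cong_def ideal_closure_eq_iff
    using Union_regs[OF AA] Union_regs[OF BB] by auto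
qed

lemma tensor_gens_subset_closure_cong:
  assumes "R_dioid TYPE('a::dioid)" and "R_dioid TYPE('b::dioid)"
  shows "(tensor_gens :: (('a \<times> 'b) set \<times> ('a \<times> 'b) set) set) \<subseteq> closure_cong"
proof
  fix P :: "('a \<times> 'b) set \<times> ('a \<times> 'b) set"
  assume "P \<in> tensor_gens"
  then obtain A B where P: "P = (A \<times> B, {(dsum A, dsum B)})" and A: "A \<in> Reg" and B: "B \<in> Reg"
    unfolding tensor_gens_def by blast
  have "(x, y) \<in> ideal_closure {(dsum A, dsum B)}" if "x \<in> A" and "y \<in> B" for x y
    by (rule ideal_closure.down[OF ideal_closure.base[OF singletonI]])
      (use dsum_upper[OF assms(1) A] dsum_upper[OF assms(2) B] that in auto)
  then have "A \<times> B \<subseteq> ideal_closure {(dsum A, dsum B)}"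
    by blast
  moreover have "(dsum A, dsum B) \<in> ideal_closure (A \<times> B)"
  proof (rule ideal_closure.sup_right[OF B])
    fix y assume "y \<in> B"
    then show "(dsum A, y) \<in> ideal_closure (A \<times> B)"
      by (intro ideal_closure.sup_left[OF A]) (auto intro: ideal_closure.base)
  qed
  ultimately show "P \<in> closure_cong"
    unfolding P closure_cong_def ideal_closure_eq_iff
    using Times_regs[OF A B] by (auto intro: regs_in.fin)
qed

lemma tensor_cong_subset_closure_cong:
  assumes "R_dioid TYPE('a::dioid)" and "R_dioid TYPE('b::dioid)"
  shows "(tensor_cong :: (('a \<times> 'b) set \<times> ('a \<times> 'b) set) set) \<subseteq> closure_cong"
  using R_cong_closure_cong[OF assms] tensor_gens_subset_closure_cong[OF assms]
  unfolding tensor_cong_def by blast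

lemma tensor_le_imp_ideal_closure:
  assumes "R_dioid TYPE('a::dioid)" and "R_dioid TYPE('b::dioid)"
    and "tensor_le (a::'a) (b::'b) a' b'"
  shows "(a, b) \<in> ideal_closure {(a', b')}"
  using assms(3) tensor_cong_subset_closure_cong[OF assms(1,2)] ideal_closure_incr
  unfolding tensor_le_def closure_cong_def by blast

lemma tensor_zero_imp_ideal_closure:
  assumes "R_dioid TYPE('a::dioid)" and "R_dioid TYPE('b::dioid)"
    and "tensor_zero (a::'a) (b::'b)"
  shows "(a, b) \<in> ideal_closure {}"
  using assms(3) tensor_cong_subset_closure_cong[OF assms(1,2)] ideal_closure_incr
  unfolding tensor_zero_def closure_cong_def by blast

lemma tensor_zero_if_zero:
  assumes "a = 0 \<or> b = 0"
  shows "tensor_zero (a::'a::dioid) (b::'b::dioid)"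
  unfolding tensor_zero_def tensor_cong_def
proof (clarify)
  fix \<theta> :: "(('a \<times> 'b) set \<times> ('a \<times> 'b) set) set"
  assume "R_cong pmul (1, 1) \<theta>" and gens: "tensor_gens \<subseteq> \<theta>"
  then have "sym \<theta>"
    unfolding R_cong_def equiv_def by blast
  have "{} \<in> Reg" "{a} \<in> Reg" "{} \<in> Reg" "{b} \<in> Reg"
    by (simp_all add: finite_Reg)
  then have "({} \<times> {b}, {(dsum {}, dsum {b})}) \<in> \<theta>" and "({a} \<times> {}, {(dsum {a}, dsum {})}) \<in> \<theta>"
    using gens unfolding tensor_gens_def by blast+
  with \<open>sym \<theta>\<close> assms show "({(a, b)}, {}) \<in> \<theta>"
    by (auto simp: dsum_empty dsum_singleton dest: symD)
qed

theorem corollary1: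
  fixes a a' :: "'a::dioid" and b b' :: "'b::dioid"
  assumes "R_dioid TYPE('a)" and "R_dioid TYPE('b)"
    and "(0::'a) \<noteq> 1" and "(0::'b) \<noteq> 1"
  shows "(tensor_zero a b \<longrightarrow> a = 0 \<or> b = 0) \<and>
         (\<not> tensor_zero a b \<and> tensor_le a b a' b' \<longrightarrow>
            a \<noteq> 0 \<and> dle a a' \<and> b \<noteq> 0 \<and> dle b b')"
proof (intro conjI impI)
  assume "tensor_zero a b"
  then have "(a, b) \<in> ideal_closure {(0, 0)}"
    using tensor_zero_imp_ideal_closure[OF assms(1,2)] ideal_closure_mono by blast
  then show "a = 0 \<or> b = 0"
    using ideal_closure_singleton[OF assms(1,2)] by (fastforce simp: dle_zero_iff)
next
  assume "\<not> tensor_zero a b \<and> tensor_le a b a' b'"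
  then have "a \<noteq> 0" "b \<noteq> 0" and "(a, b) \<in> ideal_closure {(a', b')}"
    using tensor_zero_if_zero tensor_le_imp_ideal_closure[OF assms(1,2)] by blast+
  then show "a \<noteq> 0" "dle a a'" "b \<noteq> 0" "dle b b'"
    using ideal_closure_singleton[OF assms(1,2)] by fastforce+
qed

end
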